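(* Let $\ell$ and $m$ be positive integers with $2\le\ell<m$ and let $G$ be a torsion-free abelian group written multiplicatively. Then there is no sequence $\mathcal{A}=(A_1,\dots,A_m)$ of finite subsets of $G$ satisfying simultaneously: $|A_i|\ge2$ for each $i\in[1,m]$; $|\{a\in A:\mu_{\mathcal{A}}(a)\ge2\}|\le 1$; and \[ |\Pi^{\ell}(\mathcal{A})|=\sum_{a\in A}\mu_{\mathcal{A}}(a)-\ell+1, \] where $A=A_1\cup\cdots\cup A_m$.
   Context: $\chi_S$ is the indicator function of $S$; $\mu_{\mathcal{A}}(a)=\min\big(\ell,\sum_{j=1}^m\chi_{A_j}(a)\big)$ for $a\in A$. $\Pi^{\ell}(\mathcal{A})$ is the set of all products $a_{i_1}\cdots a_{i_\ell}$ with $i_1,\dots,i_\ell\in[1,m]$ pairwise distinct and $a_{i_j}\in A_{i_j}$. *)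

theory Defs
  imports "HOL-Algebra.Algebra"
begin

definition torsion_free :: "('a, 'b) monoid_scheme \<Rightarrow> bool" where
  "torsion_free G \<longleftrightarrow>
     (\<forall>x\<in>carrier G. \<forall>n::nat. n > 0 \<longrightarrow> x [^]\<^bsub>G\<^esub> n = \<one>\<^bsub>G\<^esub> \<longrightarrow> x = \<one>\<^bsub>G\<^esub>)"

definition seq_union :: "(nat \<Rightarrow> 'a set) \<Rightarrow> nat \<Rightarrow> 'a set" where
  "seq_union A m = (\<Union>i\<in>{1..m}. A i)"

definition mult_mu :: "nat \<Rightarrow> (nat \<Rightarrow> 'a set) \<Rightarrow> nat \<Rightarrow> 'a \<Rightarrow> nat" where
  "mult_mu l A m a = min l (\<Sum>j=1..m. if a \<in> A j then 1 else 0)"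

definition restricted_prods ::
  "('a, 'b) monoid_scheme \<Rightarrow> nat \<Rightarrow> (nat \<Rightarrow> 'a set) \<Rightarrow> nat \<Rightarrow> 'a set" where
  "restricted_prods G l A m =
     {finprod G a {..<l} | (i :: nat \<Rightarrow> nat) (a :: nat \<Rightarrow> 'a).
        inj_on i {..<l} \<and> i ` {..<l} \<subseteq> {1..m} \<and> (\<forall>j<l. a j \<in> A (i j))}"

end

theory Submission
  imports Defs
begin

text \<open>A torsion-free abelian group can be totally ordered compatibly with multiplication:
  a maximal positive cone (Zorn) contains x or x^-1 for every x \<noteq> 1, as otherwise
  p x^n = 1 and q x^-r = 1 with p, q in the cone and n, r > 0, whence p^r q^n = 1.
  In an ordered group |B Y| \<ge> |B| + |Y| - 1, because the products of the least element of B
  with Y and of the greatest element of Y with the rest of B are pairwise distinct.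

  We show |\<Pi>^\<ell>| \<ge> \<Sum> \<mu> - \<ell> + 2 by induction on \<ell> \<ge> 2. For the step, remove a set
  A_j containing the element of multiplicity \<ge> 2, if there is one: then \<Pi>^(\<ell>+1) contains
  A_j times the \<ell>-fold products of the remaining sets, and \<Sum> \<mu> grows by at most |A_j|.
  For \<ell> = 2, let w be the least element of A, lying in A_j, let X be the union of the other
  sets and m \<in> A_p its greatest element, and q a third index: the products w X and
  m ((A_j \<union> A_q) - {w}) are pairwise distinct and give |\<Pi>^2| > |A|.\<close>

definition positive_cone :: "('a, 'b) monoid_scheme \<Rightarrow> 'a set \<Rightarrow> bool" where
  "positive_cone G P \<longleftrightarrow>
     P \<subseteq> carrier G \<and> (\<forall>x\<in>P. \<forall>y\<in>P. x \<otimes>\<^bsub>G\<^esub> y \<in> P) \<and> \<one>\<^bsub>G\<^esub> \<notin> P"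

lemma (in monoid) positive_cone_nat_pow:
  assumes "positive_cone G P" "p \<in> P" "0 < n"
  shows "p [^] (n::nat) \<in> P"
  using assms(3)
proof (induction n)
  case (Suc n)
  with assms show ?case
    by (cases "n = 0") (auto simp: positive_cone_def)
qed simp

lemma maximal_positive_cone_exists:
  "\<exists>P. positive_cone G P \<and> (\<forall>Q. positive_cone G Q \<longrightarrow> P \<subseteq> Q \<longrightarrow> Q = P)"
proof -
  have "positive_cone G (\<Union>C)" if chain: "subset.chain (Collect (positive_cone G)) C" for C
  proof -
    have cones: "positive_cone G Z" if "Z \<in> C" for Z
      using that chain by (auto simp: subset.chain_def)
    show ?thesis
      unfolding positive_cone_def
    proof (intro conjI ballI)
      show "\<Union>C \<subseteq> carrier G" "\<one>\<^bsub>G\<^esub> \<notin> \<Union>C"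
        using cones by (auto simp: positive_cone_def)
      fix x y assume "x \<in> \<Union>C" "y \<in> \<Union>C"
      then obtain Z where "Z \<in> C" "x \<in> Z" "y \<in> Z"
        using chain unfolding subset.chain_def by blast
      then show "x \<otimes>\<^bsub>G\<^esub> y \<in> \<Union>C"
        using cones[of Z] unfolding positive_cone_def by blast
    qed
  qed
  then show ?thesis
    using subset_Zorn'[of "Collect (positive_cone G)"] by auto
qed

text \<open>The subsemigroup generated by P and x.\<close>

definition cone_extension :: "('a, 'b) monoid_scheme \<Rightarrow> 'a set \<Rightarrow> 'a \<Rightarrow> 'a set" where
  "cone_extension G P x =
     {p \<otimes>\<^bsub>G\<^esub> x [^]\<^bsub>G\<^esub> (n::nat) | p n. p \<in> insert \<one>\<^bsub>G\<^esub> P \<and> (p \<in> P \<or> 0 < n)}"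

lemma (in comm_group) cone_extension_mult_closed:
  assumes "positive_cone G P" "x \<in> carrier G"
    and "u \<in> cone_extension G P x" "v \<in> cone_extension G P x"
  shows "u \<otimes> v \<in> cone_extension G P x"
proof -
  obtain p n q r where u: "u = p \<otimes> x [^] (n::nat)" "p \<in> insert \<one> P" "p \<in> P \<or> 0 < n"
    and v: "v = q \<otimes> x [^] (r::nat)" "q \<in> insert \<one> P" "q \<in> P \<or> 0 < r"
    using assms(3,4) unfolding cone_extension_def by blast
  have carrier: "p \<in> carrier G" "q \<in> carrier G"
    using u(2) v(2) assms(1) by (auto simp: positive_cone_def)
  have "u \<otimes> v = (p \<otimes> q) \<otimes> x [^] (n + r)"
    using u(1) v(1) carrier assms(2) by (simp add: nat_pow_mult[symmetric] m_ac)
  moreover have "p \<otimes> q \<in> insert \<one> P" "p \<otimes> q \<in> P \<or> 0 < n + r"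
    using u(2,3) v(2,3) carrier assms(1) by (auto simp: positive_cone_def)
  ultimately show ?thesis
    unfolding cone_extension_def by blast
qed

lemma (in comm_group) one_mem_cone_extension:
  assumes "positive_cone G P"
    and maximal: "\<And>Q. positive_cone G Q \<Longrightarrow> P \<subseteq> Q \<Longrightarrow> Q = P"
    and x: "x \<in> carrier G" "x \<notin> P"
  shows "\<one> \<in> cone_extension G P x"
proof -
  let ?Q = "cone_extension G P x"
  have "P \<subseteq> ?Q"
  proof
    fix p assume "p \<in> P"
    with assms(1) have "p = p \<otimes> x [^] (0::nat)"
      by (auto simp: positive_cone_def)
    with \<open>p \<in> P\<close> show "p \<in> ?Q"
      unfolding cone_extension_def by blast
  qed
  moreover have "x \<in> ?Q"
    unfolding cone_extension_def using x(1) by (intro CollectI exI[of _ \<one>] exI[of _ "1::nat"]) simp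
  ultimately have "\<not> positive_cone G ?Q"
    using maximal x(2) by blast
  moreover have "?Q \<subseteq> carrier G"
    unfolding cone_extension_def using x(1) assms(1) by (auto simp: positive_cone_def)
  ultimately show ?thesis
    using cone_extension_mult_closed[OF assms(1) x(1)] unfolding positive_cone_def by blast
qed

lemma (in comm_group) maximal_positive_cone_relation:
  assumes "torsion_free G" "positive_cone G P"
    and "\<And>Q. positive_cone G Q \<Longrightarrow> P \<subseteq> Q \<Longrightarrow> Q = P"
    and x: "x \<in> carrier G" "x \<noteq> \<one>" "x \<notin> P"
  shows "\<exists>p\<in>P. \<exists>n>0. p \<otimes> x [^] (n::nat) = \<one>"
proof -
  obtain p n where pn: "\<one> = p \<otimes> x [^] (n::nat)" "p \<in> insert \<one> P" "p \<in> P \<or> 0 < n"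
    using one_mem_cone_extension[OF assms(2,3) x(1,3)] unfolding cone_extension_def by blast
  show ?thesis
  proof (cases "p \<in> P")
    case True
    with assms(2) have "p \<in> carrier G" "p \<noteq> \<one>"
      by (auto simp: positive_cone_def)
    with pn(1)[symmetric] have "n \<noteq> 0"
      by (metis nat_pow_0 r_one)
    with True pn(1)[symmetric] show ?thesis
      by blast
  next
    case False
    with pn x(1) have "x [^] n = \<one>" "0 < n"
      by auto
    with assms(1) x(1,2) show ?thesis
      unfolding torsion_free_def by blast
  qed
qed

lemma (in comm_group) maximal_positive_cone_total:
  assumes "torsion_free G" "positive_cone G P"
    and "\<And>Q. positive_cone G Q \<Longrightarrow> P \<subseteq> Q \<Longrightarrow> Q = P"
    and x: "x \<in> carrier G" "x \<noteq> \<one>"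
  shows "x \<in> P \<or> inv x \<in> P"
proof (rule ccontr)
  assume neither: "\<not> (x \<in> P \<or> inv x \<in> P)"
  have ix: "inv x \<in> carrier G" "inv x \<noteq> \<one>"
    using x by auto
  obtain p n where p: "p \<in> P" "0 < n" "p \<otimes> x [^] (n::nat) = \<one>"
    using maximal_positive_cone_relation[OF assms(1-3) x] neither by blast
  obtain q r where q: "q \<in> P" "0 < r" "q \<otimes> inv x [^] (r::nat) = \<one>"
    using maximal_positive_cone_relation[OF assms(1-3) ix] neither by blast
  have pq: "p \<in> carrier G" "q \<in> carrier G"
    using p(1) q(1) assms(2) by (auto simp: positive_cone_def)
  have "p = inv (x [^] n)"
    using inv_equality[OF p(3)] pq x(1) by simp
  moreover have "q = x [^] r"
    using inv_equality[of q "inv (x [^] r)"] q(3) pq x(1) by (simp add: nat_pow_inv)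
  ultimately have "p [^] r \<otimes> q [^] n = \<one>"
    using x(1) by (simp add: nat_pow_inv nat_pow_pow mult.commute)
  moreover have "p [^] r \<otimes> q [^] n \<in> P"
    using assms(2) positive_cone_nat_pow[OF assms(2)] p q
    unfolding positive_cone_def by blast
  ultimately show False
    using assms(2) unfolding positive_cone_def by simp
qed

lemma (in comm_group) torsion_free_imp_total_positive_cone:
  assumes "torsion_free G"
  obtains P where "positive_cone G P"
    and "\<And>x. x \<in> carrier G \<Longrightarrow> x \<noteq> \<one> \<Longrightarrow> x \<in> P \<or> inv x \<in> P"
  using maximal_positive_cone_exists[of G] maximal_positive_cone_total[OF assms] by metis

lemma finite_total_trans_has_least:
  assumes "finite S" "S \<noteq> {}"
    and "\<And>x y z. x \<in> S \<Longrightarrow> y \<in> S \<Longrightarrow> z \<in> S \<Longrightarrow> R x y \<Longrightarrow> R y z \<Longrightarrow> R x z"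
    and "\<And>x y. x \<in> S \<Longrightarrow> y \<in> S \<Longrightarrow> x \<noteq> y \<Longrightarrow> R x y \<or> R y x"
  shows "\<exists>m\<in>S. \<forall>s\<in>S. s \<noteq> m \<longrightarrow> R m s"
  using assms
proof (induction S rule: finite_ne_induct)
  case (insert x F)
  then obtain m where m: "m \<in> F" "\<forall>s\<in>F. s \<noteq> m \<longrightarrow> R m s"
    by (metis insertCI)
  show ?case
  proof (cases "R x m")
    case True
    with m insert.prems(1) show ?thesis
      by (metis insertCI insert_iff)
  next
    case False
    have "x \<noteq> m"
      using m(1) insert.hyps by blast
    with False m(1) insert.prems(2)[of x m] have "R m x"
      by blast
    with m show ?thesis
      by blast
  qed
qed simp

lemma (in group) card_l_coset:
  assumes "a \<in> carrier G" "H \<subseteq> carrier G"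
  shows "card (a <# H) = card H"
proof -
  have "inj_on (\<lambda>h. a \<otimes> h) H"
    using inj_on_cmult[OF assms(1)] assms(2) by (rule inj_on_subset)
  then show ?thesis
    by (simp add: l_coset_def UNION_singleton_eq_range card_image)
qed

lemma (in comm_group) mult_inv_mult_distrib:
  assumes "x \<in> carrier G" "y \<in> carrier G" "u \<in> carrier G" "v \<in> carrier G"
  shows "(y \<otimes> v) \<otimes> inv (x \<otimes> u) = (y \<otimes> inv x) \<otimes> (v \<otimes> inv u)"
  using assms by (simp add: inv_mult_group m_ac)

locale ordered_comm_group = comm_group G for G (structure) +
  fixes P :: "'a set"
  assumes positive_cone: "positive_cone G P"
    and positive_or_inv_positive: "\<lbrakk>x \<in> carrier G; x \<noteq> \<one>\<rbrakk> \<Longrightarrow> x \<in> P \<or> inv x \<in> P"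
begin

definition cone_less :: "'a \<Rightarrow> 'a \<Rightarrow> bool" (infix \<open>\<lessdot>\<close> 50) where
  "x \<lessdot> y \<longleftrightarrow> y \<otimes> inv x \<in> P"

lemma cone_less_irrefl: "x \<in> carrier G \<Longrightarrow> \<not> x \<lessdot> x"
  using positive_cone by (simp add: cone_less_def positive_cone_def)

lemma cone_less_mult_mono:
  assumes "x \<in> carrier G" "y \<in> carrier G" "u \<in> carrier G" "v \<in> carrier G"
    and "x = y \<or> x \<lessdot> y" "u \<lessdot> v"
  shows "x \<otimes> u \<lessdot> y \<otimes> v"
proof -
  have "y \<otimes> inv x = \<one> \<or> y \<otimes> inv x \<in> P"
    using assms(1,5) by (auto simp: cone_less_def)
  with assms(6) positive_cone have "(y \<otimes> inv x) \<otimes> (v \<otimes> inv u) \<in> P"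
    using assms(3,4) by (auto simp: cone_less_def positive_cone_def)
  then show ?thesis
    using assms(1-4) by (simp add: cone_less_def mult_inv_mult_distrib)
qed

lemma cone_less_trans:
  assumes "x \<in> carrier G" "y \<in> carrier G" "z \<in> carrier G" "x \<lessdot> y" "y \<lessdot> z"
  shows "x \<lessdot> z"
proof -
  have "z \<otimes> inv x = (z \<otimes> inv y) \<otimes> (y \<otimes> inv x)"
    using assms(1-3) by (simp add: m_assoc inv_solve_left)
  with assms(4,5) positive_cone show ?thesis
    by (simp add: cone_less_def positive_cone_def)
qed

lemma cone_less_linear:
  assumes "x \<in> carrier G" "y \<in> carrier G" "x \<noteq> y"
  shows "x \<lessdot> y \<or> y \<lessdot> x"
proof -
  have "y \<otimes> inv x \<noteq> \<one>"
    using assms inv_equality by fastforce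
  then have "y \<otimes> inv x \<in> P \<or> inv (y \<otimes> inv x) \<in> P"
    using assms positive_or_inv_positive by simp
  then show ?thesis
    using assms by (simp add: cone_less_def inv_mult_group)
qed

lemma exists_least:
  assumes "finite S" "S \<noteq> {}" "S \<subseteq> carrier G"
  shows "\<exists>m\<in>S. \<forall>s\<in>S. s \<noteq> m \<longrightarrow> m \<lessdot> s"
  by (rule finite_total_trans_has_least[OF assms(1,2)])
    (meson assms(3) cone_less_trans subsetD, meson assms(3) cone_less_linear subsetD)

lemma exists_greatest:
  assumes "finite S" "S \<noteq> {}" "S \<subseteq> carrier G"
  shows "\<exists>m\<in>S. \<forall>s\<in>S. s \<noteq> m \<longrightarrow> s \<lessdot> m"
  by (rule finite_total_trans_has_least[OF assms(1,2), where R = "\<lambda>x y. y \<lessdot> x"])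
    (meson assms(3) cone_less_trans subsetD, meson assms(3) cone_less_linear subsetD)

lemma card_l_coset_Un_l_coset:
  assumes "w \<in> carrier G" "m \<in> carrier G" "H \<subseteq> carrier G" "K \<subseteq> carrier G"
    and "finite H" "finite K"
    and below: "\<forall>x\<in>H. x = m \<or> x \<lessdot> m" and above: "\<forall>c\<in>K. w \<lessdot> c"
  shows "card ((w <# H) \<union> (m <# K)) = card H + card K"
proof -
  have "w \<otimes> x \<noteq> m \<otimes> c" if "x \<in> H" "c \<in> K" for x c
  proof -
    have "x \<otimes> w \<lessdot> m \<otimes> c"
      using that assms by (intro cone_less_mult_mono) auto
    moreover have "x \<otimes> w = w \<otimes> x" "m \<otimes> c \<in> carrier G"
      using that assms(1-4) by (blast intro: m_comm, blast)
    ultimately show ?thesis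
      using cone_less_irrefl by metis
  qed
  then have "(w <# H) \<inter> (m <# K) = {}"
    by (auto simp: l_coset_def)
  moreover have "finite (w <# H)" "finite (m <# K)"
    using assms(5,6) by (simp_all add: l_coset_def)
  ultimately show ?thesis
    using assms(1-4) by (simp add: card_Un_disjoint card_l_coset)
qed

lemma card_set_mult_lower_bound:
  assumes "finite B" "finite Y" "B \<noteq> {}" "Y \<noteq> {}" "B \<subseteq> carrier G" "Y \<subseteq> carrier G"
  shows "card B + card Y \<le> card (B <#> Y) + 1"
proof -
  obtain b where b: "b \<in> B" "\<forall>c\<in>B. c \<noteq> b \<longrightarrow> b \<lessdot> c"
    using exists_least assms(1,3,5) by blast
  obtain m where m: "m \<in> Y" "\<forall>y\<in>Y. y \<noteq> m \<longrightarrow> y \<lessdot> m"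
    using exists_greatest assms(2,4,6) by blast
  have "card ((b <# Y) \<union> (m <# (B - {b}))) = card Y + card (B - {b})"
    using b m assms by (intro card_l_coset_Un_l_coset) auto
  moreover have "(b <# Y) \<union> (m <# (B - {b})) \<subseteq> B <#> Y"
  proof -
    have "m \<otimes> c \<in> B <#> Y" if "c \<in> B" for c
      using that m(1) assms(5,6) m_comm[of m c] by (auto simp: set_mult_def)
    with b(1) show ?thesis
      by (auto simp: l_coset_def set_mult_def)
  qed
  moreover have "finite (B <#> Y)"
    using assms by (simp add: set_mult_def)
  ultimately have "card Y + card (B - {b}) \<le> card (B <#> Y)"
    by (metis card_mono)
  moreover have "Suc (card (B - {b})) = card B"
    by (intro card_Suc_Diff1 assms(1) b(1))
  ultimately show ?thesis
    by linarith
qed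

end

definition restricted_prods_on ::
  "('a, 'b) monoid_scheme \<Rightarrow> nat \<Rightarrow> (nat \<Rightarrow> 'a set) \<Rightarrow> nat set \<Rightarrow> 'a set" where
  "restricted_prods_on G l A I =
     {finprod G a {..<l} | (i :: nat \<Rightarrow> nat) (a :: nat \<Rightarrow> 'a).
        inj_on i {..<l} \<and> i ` {..<l} \<subseteq> I \<and> (\<forall>j<l. a j \<in> A (i j))}"

lemma restricted_prods_eq_restricted_prods_on:
  "restricted_prods G l A m = restricted_prods_on G l A {1..m}"
  by (simp add: restricted_prods_def restricted_prods_on_def)

context comm_monoid
begin

lemma restricted_prods_on_subset_carrier:
  assumes "\<forall>i\<in>I. A i \<subseteq> carrier G"
  shows "restricted_prods_on G l A I \<subseteq> carrier G"
  using assms by (fastforce simp: restricted_prods_on_def intro!: finprod_closed)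

lemma finite_restricted_prods_on:
  assumes "finite I" "\<forall>i\<in>I. finite (A i) \<and> A i \<subseteq> carrier G"
  shows "finite (restricted_prods_on G l A I)"
proof -
  let ?U = "\<Union>i\<in>I. A i"
  have "restricted_prods_on G l A I \<subseteq> (\<lambda>a. finprod G a {..<l}) ` ({..<l} \<rightarrow>\<^sub>E ?U)"
  proof
    fix z assume "z \<in> restricted_prods_on G l A I"
    then obtain i a where z: "z = finprod G a {..<l}" "i ` {..<l} \<subseteq> I" "\<forall>j<l. a j \<in> A (i j)"
      unfolding restricted_prods_on_def by blast
    then have "restrict a {..<l} \<in> {..<l} \<rightarrow>\<^sub>E ?U"
      by auto
    moreover have "z = finprod G (restrict a {..<l}) {..<l}"
      using z assms(2) by (auto intro!: finprod_cong')
    ultimately show "z \<in> (\<lambda>a. finprod G a {..<l}) ` ({..<l} \<rightarrow>\<^sub>E ?U)"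
      by blast
  qed
  moreover have "finite ({..<l} \<rightarrow>\<^sub>E ?U)"
    using assms by (simp add: finite_PiE)
  ultimately show ?thesis
    by (meson finite_imageI finite_subset)
qed

lemma one_mem_restricted_prods_on_0: "\<one> \<in> restricted_prods_on G 0 A I"
  unfolding restricted_prods_on_def by auto

lemma mult_mem_restricted_prods_on_Suc:
  assumes "j \<in> I" "b \<in> A j" "b \<in> carrier G" "\<forall>i\<in>I - {j}. A i \<subseteq> carrier G"
    and "z \<in> restricted_prods_on G l A (I - {j})"
  shows "b \<otimes> z \<in> restricted_prods_on G (Suc l) A I"
proof -
  obtain i a where z: "z = finprod G a {..<l}" "inj_on i {..<l}" "i ` {..<l} \<subseteq> I - {j}"
    "\<forall>t<l. a t \<in> A (i t)"
    using assms(5) unfolding restricted_prods_on_def by blast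
  have a: "a \<in> {..<l} \<rightarrow> carrier G"
    using z(3,4) assms(4) by fastforce
  have "b \<otimes> z = finprod G (a(l := b)) {..<Suc l}"
  proof -
    have "a(l := b) \<in> {..l} \<rightarrow> carrier G"
      using a assms(3) by (auto simp: Pi_def)
    then have "finprod G (a(l := b)) {..<Suc l} = b \<otimes> finprod G (a(l := b)) {..<l}"
      by (simp add: lessThan_Suc_atMost finprod_Suc3)
    also have "finprod G (a(l := b)) {..<l} = z"
      using a z(1) by (auto intro: finprod_cong')
    finally show ?thesis
      by (rule sym)
  qed
  moreover have "inj_on (i(l := j)) {..<Suc l}"
    using z(2,3) by (auto simp: lessThan_Suc inj_on_def)
  moreover have "(i(l := j)) ` {..<Suc l} \<subseteq> I"
    using z(3) assms(1) by (auto simp: lessThan_Suc)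
  moreover have "\<forall>t<Suc l. (a(l := b)) t \<in> A ((i(l := j)) t)"
    using z(4) assms(2) by (auto simp: less_Suc_eq)
  ultimately show ?thesis
    unfolding restricted_prods_on_def by blast
qed

lemma mult_mem_restricted_prods_on_2:
  assumes "i \<in> I" "k \<in> I" "i \<noteq> k" "b \<in> A i" "c \<in> A k" "\<forall>j\<in>I. A j \<subseteq> carrier G"
  shows "b \<otimes> c \<in> restricted_prods_on G 2 A I"
proof -
  have "c \<otimes> \<one> \<in> restricted_prods_on G (Suc 0) A (I - {i})"
    by (rule mult_mem_restricted_prods_on_Suc)
      (use assms one_mem_restricted_prods_on_0 in auto)
  then have "b \<otimes> (c \<otimes> \<one>) \<in> restricted_prods_on G (Suc (Suc 0)) A I"
    using assms by (auto intro: mult_mem_restricted_prods_on_Suc)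
  moreover have "c \<otimes> \<one> = c"
    using assms(2,5,6) by (blast intro: r_one)
  ultimately show ?thesis
    by (simp add: numeral_2_eq_2)
qed

lemma restricted_prods_on_nonempty:
  assumes "finite I" "l \<le> card I" "\<forall>i\<in>I. A i \<noteq> {} \<and> A i \<subseteq> carrier G"
  shows "restricted_prods_on G l A I \<noteq> {}"
  using assms
proof (induction l arbitrary: I)
  case 0
  then show ?case
    using one_mem_restricted_prods_on_0 by blast
next
  case (Suc l)
  then obtain j b where j: "j \<in> I" "b \<in> A j"
    by (metis all_not_in_conv card.empty not_less_eq_eq zero_le)
  moreover have "restricted_prods_on G l A (I - {j}) \<noteq> {}"
    using Suc j by (intro Suc.IH) auto
  ultimately show ?case
    using Suc.prems(3) mult_mem_restricted_prods_on_Suc[of j I b A] by blast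
qed

end

definition occurrences :: "nat set \<Rightarrow> (nat \<Rightarrow> 'a set) \<Rightarrow> 'a \<Rightarrow> nat" where
  "occurrences I A a = (\<Sum>i\<in>I. if a \<in> A i then 1 else 0)"

lemma mult_mu_eq_min_occurrences: "mult_mu l A m a = min l (occurrences {1..m} A a)"
  by (simp add: mult_mu_def occurrences_def)

lemma occurrences_remove:
  assumes "finite I" "j \<in> I"
  shows "occurrences I A a = occurrences (I - {j}) A a + (if a \<in> A j then 1 else 0)"
  unfolding occurrences_def by (subst sum.remove[OF assms]) (simp add: add.commute)

lemma sum_min_2_le:
  fixes f :: "'a \<Rightarrow> nat"
  assumes "finite U"
  shows "(\<Sum>a\<in>U. min 2 (f a)) \<le> card U + card {a \<in> U. 2 \<le> f a}"
proof -
  have "(\<Sum>a\<in>U. min 2 (f a)) \<le> (\<Sum>a\<in>U. 1 + of_bool (2 \<le> f a))"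
    by (intro sum_mono) auto
  also have "\<dots> = card U + card (U \<inter> {a. 2 \<le> f a})"
    using assms by (simp only: sum.distrib) simp
  also have "U \<inter> {a. 2 \<le> f a} = {a \<in> U. 2 \<le> f a}"
    by blast
  finally show ?thesis .
qed

lemma obtain_index_containing_repeated:
  assumes "finite I" "I \<noteq> {}" "\<forall>i\<in>I. finite (A i)"
    and "card {a \<in> (\<Union>i\<in>I. A i). 2 \<le> occurrences I A a} \<le> 1"
  obtains j where "j \<in> I"
    and "\<And>a. a \<in> (\<Union>i\<in>I. A i) \<Longrightarrow> a \<notin> A j \<Longrightarrow> occurrences I A a \<le> 1"
proof (cases "{a \<in> (\<Union>i\<in>I. A i). 2 \<le> occurrences I A a} = {}")
  case True
  with assms(2) that show ?thesis
    by fastforce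
next
  case False
  then obtain r j where r: "2 \<le> occurrences I A r" "j \<in> I" "r \<in> A j"
    by blast
  have "finite {a \<in> (\<Union>i\<in>I. A i). 2 \<le> occurrences I A a}"
    using assms(1,3) by simp
  with r assms(4) have unique: "a = r"
    if "a \<in> (\<Union>i\<in>I. A i)" "2 \<le> occurrences I A a" for a
    using that by (auto simp: card_le_Suc0_iff_eq)
  show ?thesis
  proof (rule that[OF r(2)])
    fix a assume "a \<in> (\<Union>i\<in>I. A i)" "a \<notin> A j"
    with r(3) unique show "occurrences I A a \<le> 1"
      by fastforce
  qed
qed

lemma card_repeated_Diff_le:
  assumes "finite I" "j \<in> I" "\<forall>i\<in>I. finite (A i)"
  shows "card {a \<in> (\<Union>i\<in>I - {j}. A i). 2 \<le> occurrences (I - {j}) A a}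
           \<le> card {a \<in> (\<Union>i\<in>I. A i). 2 \<le> occurrences I A a}"
proof (rule card_mono)
  show "finite {a \<in> (\<Union>i\<in>I. A i). 2 \<le> occurrences I A a}"
    using assms(1,3) by simp
  show "{a \<in> (\<Union>i\<in>I - {j}. A i). 2 \<le> occurrences (I - {j}) A a}
          \<subseteq> {a \<in> (\<Union>i\<in>I. A i). 2 \<le> occurrences I A a}"
    by (auto simp: occurrences_remove[OF assms(1,2)])
qed

lemma sum_min_Suc_occurrences_le:
  assumes "finite I" "j \<in> I" "\<forall>i\<in>I. finite (A i)"
    and "\<And>a. a \<in> (\<Union>i\<in>I. A i) \<Longrightarrow> a \<notin> A j \<Longrightarrow> occurrences I A a \<le> l"
  shows "(\<Sum>a\<in>(\<Union>i\<in>I. A i). min (Suc l) (occurrences I A a))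
           \<le> card (A j) + (\<Sum>a\<in>(\<Union>i\<in>I - {j}. A i). min l (occurrences (I - {j}) A a))"
proof -
  let ?U = "\<Union>i\<in>I. A i" and ?U' = "\<Union>i\<in>I - {j}. A i"
  have "(\<Sum>a\<in>?U. min (Suc l) (occurrences I A a))
          \<le> (\<Sum>a\<in>?U. of_bool (a \<in> A j) + min l (occurrences (I - {j}) A a))"
    using assms by (intro sum_mono) (auto simp: occurrences_remove[OF assms(1,2)])
  also have "\<dots> = card (A j) + (\<Sum>a\<in>?U'. min l (occurrences (I - {j}) A a))"
  proof -
    have "?U \<inter> {a. a \<in> A j} = A j"
      using assms(2) by blast
    then have "(\<Sum>a\<in>?U. of_bool (a \<in> A j)) = card (A j)"
      using assms(1,3) by simp
    moreover have "(\<Sum>a\<in>?U. min l (occurrences (I - {j}) A a))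
                     = (\<Sum>a\<in>?U'. min l (occurrences (I - {j}) A a))"
      using assms(1,3) by (intro sum.mono_neutral_right) (auto simp: occurrences_def)
    ultimately show ?thesis
      by (simp add: sum.distrib)
  qed
  finally show ?thesis .
qed

lemma card_UN_less_card_UN_Diff_add:
  assumes "finite I" "j \<in> I" "q \<in> I - {j}" "\<forall>i\<in>I. finite (A i)"
    and "2 \<le> card (A q)" "w \<in> A j"
  shows "card (\<Union>i\<in>I. A i) < card (\<Union>i\<in>I - {j}. A i) + card ((A j \<union> A q) - {w})"
proof -
  let ?X = "\<Union>i\<in>I - {j}. A i"
  have "card (\<Union>i\<in>I. A i) = card (?X \<union> (A j - ?X))"
    using assms(2) by (intro arg_cong[where f = card]) blast
  also have "\<dots> = card ?X + card (A j - ?X)"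
    using assms(1,2,4) by (intro card_Un_disjoint) auto
  finally have "card (\<Union>i\<in>I. A i) = card ?X + card (A j - ?X)" .
  moreover have "card (A j - ?X) + card (A q) = card ((A j - ?X) \<union> A q)"
    using assms(2-4) by (intro card_Un_disjoint[symmetric]) auto
  moreover have "card ((A j - ?X) \<union> A q) \<le> card (A j \<union> A q)"
    using assms(2-4) by (intro card_mono) auto
  moreover have "Suc (card ((A j \<union> A q) - {w})) = card (A j \<union> A q)"
    using assms(2-4,6) by (intro card_Suc_Diff1) auto
  ultimately show ?thesis
    using assms(5) by linarith
qed

context ordered_comm_group
begin

lemma card_restricted_prods_on_Suc_lower_bound:
  assumes "finite I" "j \<in> I" "l < card I"
    and "\<forall>i\<in>I. finite (A i) \<and> A i \<subseteq> carrier G \<and> A i \<noteq> {}"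
  shows "card (A j) + card (restricted_prods_on G l A (I - {j}))
           \<le> card (restricted_prods_on G (Suc l) A I) + 1"
proof -
  let ?Y = "restricted_prods_on G l A (I - {j})"
  have "?Y \<noteq> {}"
    using assms by (intro restricted_prods_on_nonempty) auto
  moreover have "finite ?Y" "?Y \<subseteq> carrier G"
    using assms by (auto intro!: finite_restricted_prods_on restricted_prods_on_subset_carrier)
  ultimately have "card (A j) + card ?Y \<le> card (A j <#> ?Y) + 1"
    using assms by (intro card_set_mult_lower_bound) auto
  moreover have "A j <#> ?Y \<subseteq> restricted_prods_on G (Suc l) A I"
    using assms by (auto simp: set_mult_def intro!: mult_mem_restricted_prods_on_Suc)
  moreover have "finite (restricted_prods_on G (Suc l) A I)"
    using assms by (intro finite_restricted_prods_on) auto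
  ultimately show ?thesis
    by (meson card_mono add_le_mono1 order_trans)
qed

lemma card_Union_less_card_restricted_prods_on_2:
  assumes "finite I" "2 < card I"
    and sets: "\<forall>i\<in>I. finite (A i) \<and> A i \<subseteq> carrier G \<and> 2 \<le> card (A i)"
  shows "card (\<Union>i\<in>I. A i) < card (restricted_prods_on G 2 A I)"
proof -
  let ?U = "\<Union>i\<in>I. A i"
  have carrier: "\<forall>i\<in>I. A i \<subseteq> carrier G" and nonempty: "\<And>i. i \<in> I \<Longrightarrow> A i \<noteq> {}"
    using sets by fastforce+
  have "?U \<noteq> {}" "finite ?U" "?U \<subseteq> carrier G"
    using assms nonempty by (auto simp: card_gt_0_iff)
  then obtain w where w: "w \<in> ?U" "\<forall>u\<in>?U. u \<noteq> w \<longrightarrow> w \<lessdot> u"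
    using exists_least by blast
  then obtain j where j: "j \<in> I" "w \<in> A j"
    by blast
  let ?X = "\<Union>i\<in>I - {j}. A i"
  have "card (I - {j}) \<noteq> 0"
    using assms(2) j(1) by simp
  then have "?X \<noteq> {}" "finite ?X" "?X \<subseteq> carrier G"
    using assms(1) sets nonempty by (auto simp: card_eq_0_iff)
  then obtain m where m: "m \<in> ?X" "\<forall>x\<in>?X. x \<noteq> m \<longrightarrow> x \<lessdot> m"
    using exists_greatest by blast
  then obtain p where p: "p \<in> I - {j}" "m \<in> A p"
    by blast
  have "card (I - {j} - {p}) \<noteq> 0"
    using assms(2) j(1) p(1) by simp
  then obtain q where q: "q \<in> I - {j} - {p}"
    by (metis card.empty ex_in_conv)
  let ?C = "(A j \<union> A q) - {w}"
  have "card ((w <# ?X) \<union> (m <# ?C)) = card ?X + card ?C"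
  proof (rule card_l_coset_Un_l_coset)
    show "\<forall>c\<in>?C. w \<lessdot> c"
      using w(2) j(1) q by blast
  qed (use assms(1) sets w m j q in auto)
  moreover have "(w <# ?X) \<union> (m <# ?C) \<subseteq> restricted_prods_on G 2 A I"
  proof -
    have "w \<otimes> x \<in> restricted_prods_on G 2 A I" if "x \<in> ?X" for x
      using that j carrier by (auto intro: mult_mem_restricted_prods_on_2)
    moreover have "m \<otimes> c \<in> restricted_prods_on G 2 A I" if "c \<in> A j \<union> A q" for c
      using that j p q carrier
      by (auto intro: mult_mem_restricted_prods_on_2[of p I j] mult_mem_restricted_prods_on_2[of p I q])
    ultimately show ?thesis
      by (auto simp: l_coset_def)
  qed
  moreover have "finite (restricted_prods_on G 2 A I)"
    using assms(1) sets by (intro finite_restricted_prods_on) auto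
  ultimately have "card ?X + card ?C \<le> card (restricted_prods_on G 2 A I)"
    by (metis card_mono)
  moreover have "card ?U < card ?X + card ?C"
    using assms(1) sets j q by (intro card_UN_less_card_UN_Diff_add) auto
  ultimately show ?thesis
    by linarith
qed

lemma restricted_prods_on_lower_bound:
  assumes "2 \<le> l" "finite I" "l < card I"
    and "\<forall>i\<in>I. finite (A i) \<and> A i \<subseteq> carrier G \<and> 2 \<le> card (A i)"
    and "card {a \<in> (\<Union>i\<in>I. A i). 2 \<le> occurrences I A a} \<le> 1"
  shows "(\<Sum>a\<in>(\<Union>i\<in>I. A i). min l (occurrences I A a)) + 2
           \<le> card (restricted_prods_on G l A I) + l"
  using assms
proof (induction l arbitrary: I rule: nat_induct_at_least)
  case base
  have "(\<Sum>a\<in>(\<Union>i\<in>I. A i). min 2 (occurrences I A a)) \<le> card (\<Union>i\<in>I. A i) + 1"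
    using sum_min_2_le[of "\<Union>i\<in>I. A i" "occurrences I A"] base.prems(1,3,4) by simp
  moreover have "card (\<Union>i\<in>I. A i) < card (restricted_prods_on G 2 A I)"
    using base.prems by (intro card_Union_less_card_restricted_prods_on_2) auto
  ultimately show ?case
    by linarith
next
  case (Suc l)
  have finite_sets: "\<forall>i\<in>I. finite (A i)" and nonempty_sets: "\<forall>i\<in>I. A i \<noteq> {}"
    using Suc.prems(3) by fastforce+
  have "I \<noteq> {}"
    using Suc.prems(2) by auto
  then obtain j where j: "j \<in> I"
    and single: "\<And>a. a \<in> (\<Union>i\<in>I. A i) \<Longrightarrow> a \<notin> A j \<Longrightarrow> occurrences I A a \<le> 1"
    using obtain_index_containing_repeated[OF Suc.prems(1) _ finite_sets Suc.prems(4)]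
    by blast
  have "(\<Sum>a\<in>(\<Union>i\<in>I - {j}. A i). min l (occurrences (I - {j}) A a)) + 2
          \<le> card (restricted_prods_on G l A (I - {j})) + l"
  proof (rule Suc.IH)
    show "finite (I - {j})" "l < card (I - {j})"
      using Suc.prems(1,2) j by auto
    show "\<forall>i\<in>I - {j}. finite (A i) \<and> A i \<subseteq> carrier G \<and> 2 \<le> card (A i)"
      using Suc.prems(3) by blast
    show "card {a \<in> (\<Union>i\<in>I - {j}. A i). 2 \<le> occurrences (I - {j}) A a} \<le> 1"
      using card_repeated_Diff_le[OF Suc.prems(1) j finite_sets] Suc.prems(4) by linarith
  qed
  moreover have "(\<Sum>a\<in>(\<Union>i\<in>I. A i). min (Suc l) (occurrences I A a))
                   \<le> card (A j) + (\<Sum>a\<in>(\<Union>i\<in>I - {j}. A i). min l (occurrences (I - {j}) A a))"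
    using Suc.hyps single
    by (intro sum_min_Suc_occurrences_le[OF Suc.prems(1) j finite_sets]) force
  moreover have "card (A j) + card (restricted_prods_on G l A (I - {j}))
                   \<le> card (restricted_prods_on G (Suc l) A I) + 1"
    using Suc.prems(1-3) nonempty_sets j
    by (intro card_restricted_prods_on_Suc_lower_bound) auto
  ultimately show ?case
    by linarith
qed

end

theorem card_restricted_prods_lower_bound:
  fixes G :: "('a, 'b) monoid_scheme"
  assumes "comm_group G" "torsion_free G" "2 \<le> l" "l < m"
    and "\<forall>i\<in>{1..m}. finite (A i) \<and> A i \<subseteq> carrier G \<and> 2 \<le> card (A i)"
    and "card {a \<in> seq_union A m. 2 \<le> mult_mu l A m a} \<le> 1"
  shows "(\<Sum>a\<in>seq_union A m. mult_mu l A m a) + 2 \<le> card (restricted_prods G l A m) + l"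
proof -
  interpret comm_group G
    by (rule assms(1))
  obtain P where "positive_cone G P"
    and "\<And>x. x \<in> carrier G \<Longrightarrow> x \<noteq> \<one>\<^bsub>G\<^esub> \<Longrightarrow> x \<in> P \<or> inv\<^bsub>G\<^esub> x \<in> P"
    using torsion_free_imp_total_positive_cone[OF assms(2)] by blast
  then interpret ordered_comm_group G P
    by unfold_locales
  have "{a \<in> seq_union A m. 2 \<le> mult_mu l A m a}
          = {a \<in> (\<Union>i\<in>{1..m}. A i). 2 \<le> occurrences {1..m} A a}"
    using assms(3) by (auto simp: seq_union_def mult_mu_eq_min_occurrences)
  with assms(3-6) show ?thesis
    using restricted_prods_on_lower_bound[of l "{1..m}" A]
    by (simp add: seq_union_def mult_mu_eq_min_occurrences restricted_prods_eq_restricted_prods_on)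
qed

theorem theorem1p17:
  fixes G :: "('a, 'b) monoid_scheme" and l m :: nat
  assumes "comm_group G" and "torsion_free G"
    and "2 \<le> l" and "l < m"
  shows "\<not> (\<exists>A :: nat \<Rightarrow> 'a set.
           (\<forall>i\<in>{1..m}. finite (A i) \<and> A i \<subseteq> carrier G \<and> card (A i) \<ge> 2)
         \<and> card {a \<in> seq_union A m. mult_mu l A m a \<ge> 2} \<le> 1
         \<and> int (card (restricted_prods G l A m))
             = int (\<Sum>a\<in>seq_union A m. mult_mu l A m a) - int l + 1)"
proof (intro notI, elim exE conjE)
  fix A :: "nat \<Rightarrow> 'a set"
  assume "\<forall>i\<in>{1..m}. finite (A i) \<and> A i \<subseteq> carrier G \<and> card (A i) \<ge> 2"
    and "card {a \<in> seq_union A m. mult_mu l A m a \<ge> 2} \<le> 1"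
    and extremal: "int (card (restricted_prods G l A m))
                     = int (\<Sum>a\<in>seq_union A m. mult_mu l A m a) - int l + 1"
  then have "(\<Sum>a\<in>seq_union A m. mult_mu l A m a) + 2 \<le> card (restricted_prods G l A m) + l"
    using card_restricted_prods_lower_bound[OF assms] by blast
  with extremal show False
    by linarith
qed

end
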